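(* Let $S=G\times E$ be a right group with $G$ an infinite group and $E$ a right zero semigroup, and let $T$ be a subsemigroup of $S$ of finite Green index. Then $T=H\times E$ for some subgroup $H$ of finite index in $G$; in particular $T$ is a right group.
   Context: A right zero semigroup is a semigroup $E$ with $ef=f$ for all $e,f\in E$; a right group is a direct product $G\times E$ of a group and a right zero semigroup, with componentwise multiplication $(g,e)(h,f)=(gh,f)$. For a subsemigroup $T$ of a semigroup $S$, the relative Green's relations on $S$ are: $u\,\mathcal{R}^T v$ iff $uT^1=vT^1$, $u\,\mathcal{L}^T v$ iff $T^1u=T^1v$, and $\mathcal{H}^T=\mathcal{R}^T\cap\mathcal{L}^T$, where $T^1=T\cup\{1\}$. The Green index of $T$ in $S$ is one plus the number of $\mathcal{H}^T$-classes contained in $S\setminus T$. *)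

theory Defs
  imports "HOL-Algebra.Coset"
begin

text \<open>Multiplication of the right group G x E: (g,e)(h,f) = (gh, f).
  The right zero semigroup E is given by its underlying set; its product is e f = f.\<close>
definition rg_mult :: "('g, 'm) monoid_scheme \<Rightarrow> 'g \<times> 'e \<Rightarrow> 'g \<times> 'e \<Rightarrow> 'g \<times> 'e" where
  "rg_mult G x y = (fst x \<otimes>\<^bsub>G\<^esub> fst y, snd y)"

definition subsemigroup :: "('a \<Rightarrow> 'a \<Rightarrow> 'a) \<Rightarrow> 'a set \<Rightarrow> 'a set \<Rightarrow> bool" where
  "subsemigroup m S T \<longleftrightarrow> T \<subseteq> S \<and> (\<forall>x\<in>T. \<forall>y\<in>T. m x y \<in> T)"

definition right_ideal1 :: "('a \<Rightarrow> 'a \<Rightarrow> 'a) \<Rightarrow> 'a set \<Rightarrow> 'a \<Rightarrow> 'a set" where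
  "right_ideal1 m T u = insert u ((\<lambda>t. m u t) ` T)"

definition left_ideal1 :: "('a \<Rightarrow> 'a \<Rightarrow> 'a) \<Rightarrow> 'a set \<Rightarrow> 'a \<Rightarrow> 'a set" where
  "left_ideal1 m T u = insert u ((\<lambda>t. m t u) ` T)"

definition rel_R :: "('a \<Rightarrow> 'a \<Rightarrow> 'a) \<Rightarrow> 'a set \<Rightarrow> 'a \<Rightarrow> 'a \<Rightarrow> bool" where
  "rel_R m T u v \<longleftrightarrow> right_ideal1 m T u = right_ideal1 m T v"

definition rel_L :: "('a \<Rightarrow> 'a \<Rightarrow> 'a) \<Rightarrow> 'a set \<Rightarrow> 'a \<Rightarrow> 'a \<Rightarrow> bool" where
  "rel_L m T u v \<longleftrightarrow> left_ideal1 m T u = left_ideal1 m T v"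

definition rel_H :: "('a \<Rightarrow> 'a \<Rightarrow> 'a) \<Rightarrow> 'a set \<Rightarrow> 'a \<Rightarrow> 'a \<Rightarrow> bool" where
  "rel_H m T u v \<longleftrightarrow> rel_R m T u v \<and> rel_L m T u v"

definition H_classes :: "('a \<Rightarrow> 'a \<Rightarrow> 'a) \<Rightarrow> 'a set \<Rightarrow> 'a set \<Rightarrow> 'a set set" where
  "H_classes m S T = {{v \<in> S. rel_H m T u v} | u. u \<in> S}"

definition outer_H_classes :: "('a \<Rightarrow> 'a \<Rightarrow> 'a) \<Rightarrow> 'a set \<Rightarrow> 'a set \<Rightarrow> 'a set set" where
  "outer_H_classes m S T = {C \<in> H_classes m S T. C \<subseteq> S - T}"

definition finite_green_index :: "('a \<Rightarrow> 'a \<Rightarrow> 'a) \<Rightarrow> 'a set \<Rightarrow> 'a set \<Rightarrow> bool" where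
  "finite_green_index m S T \<longleftrightarrow> finite (outer_H_classes m S T)"

definition green_index :: "('a \<Rightarrow> 'a \<Rightarrow> 'a) \<Rightarrow> 'a set \<Rightarrow> 'a set \<Rightarrow> nat" where
  "green_index m S T = Suc (card (outer_H_classes m S T))"

end

theory Submission imports Defs begin

(* Write T_e = {g. (g,e) \<in> T} for the fibre of T over e \<in> E.
   Each fibre is a subsemigroup of G.  If (x,e) \<notin> T then its H^T-class avoids T
   (an R^T-class meeting T lies in T), so it is one of the finitely many outer
   classes; fix a representative (g0,e0) of each.  Comparing left and right
   ideals in the right group shows that either (x,e) = (g0,e0) or e0 = e and
   x = g0 k with k and k^-1 in T_e.  So G - T_e is covered by finitely many
   "translates" f U(T_e), where U(T_e) is the group of units of T_e.
   The group-theoretic part then shows that a subsemigroup Q of an infinite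
   group with such a finite covering contains 1, is closed under inverses (a
   pigeonhole argument on the powers of x^-1), and has finitely many right
   cosets.  Finally all fibres coincide (T_e T_f \<subseteq> T_f and 1 \<in> T_e), so
   T = H \<times> E with H any fibre. *)

section \<open>Subsemigroups of groups covered by finitely many unit translates\<close>

definition (in group) unit_translate_cover :: "'a set \<Rightarrow> 'a set \<Rightarrow> bool" where
  "unit_translate_cover Q F \<longleftrightarrow>
     (\<forall>x \<in> carrier G - Q. \<exists>f\<in>F. x = f \<or> (\<exists>k\<in>Q. inv k \<in> Q \<and> x = f \<otimes> k))"

text \<open>If Q contains no unit at all, the cover says G - Q \<subseteq> F, and Q itself is
  mapped into F by inversion; so an infinite group forces 1 \<in> Q.\<close>

lemma (in group) cover_one_mem:
  assumes inf: "infinite (carrier G)" and Qc: "Q \<subseteq> carrier G"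
    and Qm: "\<And>x y. x \<in> Q \<Longrightarrow> y \<in> Q \<Longrightarrow> x \<otimes> y \<in> Q"
    and F: "finite F" and cov: "unit_translate_cover Q F"
  shows "\<one> \<in> Q"
proof (rule ccontr)
  assume one: "\<one> \<notin> Q"
  have no_unit: "\<not> (k \<in> Q \<and> inv k \<in> Q)" for k
    using one Qm Qc by (metis r_inv subsetD)
  have outside: "carrier G - Q \<subseteq> F"
    using cov no_unit unfolding unit_translate_cover_def by blast
  have "carrier G \<subseteq> F \<union> (\<lambda>z. inv z) ` F"
  proof
    fix x assume x: "x \<in> carrier G"
    show "x \<in> F \<union> (\<lambda>z. inv z) ` F"
    proof (cases "x \<in> Q")
      case True
      then have "inv x \<in> F" using no_unit outside x by auto
      then show ?thesis using x by (metis UnI2 image_eqI inv_inv)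
    next
      case False
      then show ?thesis using outside x by auto
    qed
  qed
  then show False using inf F by (meson finite_Un finite_imageI finite_subset)
qed

text \<open>A submonoid with a finite unit-translate cover is closed under inverses:
  if x \<in> Q but y = x^-1 \<notin> Q, no positive power of y lies in Q, yet two powers
  y^n, y^m (n < m) fall into the same translate f U(Q), forcing y^(m-n) \<in> Q.\<close>

lemma (in group) cover_inv_mem:
  assumes Qc: "Q \<subseteq> carrier G"
    and Qm: "\<And>x y. x \<in> Q \<Longrightarrow> y \<in> Q \<Longrightarrow> x \<otimes> y \<in> Q"
    and one: "\<one> \<in> Q"
    and F: "finite F" "F \<subseteq> carrier G" and cov: "unit_translate_cover Q F"
    and xQ: "x \<in> Q"
  shows "inv x \<in> Q"
proof (rule ccontr)
  define y where "y = inv x"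
  assume "inv x \<notin> Q"
  then have yQ: "y \<notin> Q" by (simp add: y_def)
  have xc: "x \<in> carrier G" and yc: "y \<in> carrier G" using xQ Qc by (auto simp: y_def)
  have pow_mem: "x [^] (n::nat) \<in> Q" for n
    by (induction n) (auto simp: one Qm xQ)
  have pow_notin: "y [^] n \<notin> Q" if "n > 0" for n :: nat
  proof
    assume "y [^] n \<in> Q"
    then have "x [^] (n - 1) \<otimes> y [^] n \<in> Q" using Qm pow_mem by blast
    moreover have "x [^] (n - 1) \<otimes> y [^] n = y"
    proof -
      have "y [^] n = y [^] (n - 1) \<otimes> y"
        using that yc by (metis Suc_diff_1 nat_pow_Suc)
      moreover have "x [^] (n - 1) \<otimes> y [^] (n - 1) = \<one>"
        using xc by (simp add: y_def nat_pow_inv)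
      ultimately show ?thesis using xc yc by (metis m_assoc nat_pow_closed l_one)
    qed
    ultimately show False using yQ by simp
  qed
  have "\<forall>n. \<exists>f\<in>F. \<exists>k\<in>Q. inv k \<in> Q \<and> y [^] Suc n = f \<otimes> k"
  proof
    fix n
    have "y [^] Suc n \<in> carrier G - Q" using pow_notin[of "Suc n"] yc by (metis DiffI nat_pow_closed zero_less_Suc)
    then obtain f where f: "f \<in> F"
      and "y [^] Suc n = f \<or> (\<exists>k\<in>Q. inv k \<in> Q \<and> y [^] Suc n = f \<otimes> k)"
      using cov unfolding unit_translate_cover_def by blast
    then show "\<exists>f\<in>F. \<exists>k\<in>Q. inv k \<in> Q \<and> y [^] Suc n = f \<otimes> k"
      using one F by (metis inv_one r_one subsetD)
  qed
  then obtain fn kn where fk: "\<And>n. fn n \<in> F \<and> kn n \<in> Q \<and> inv (kn n) \<in> Q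
      \<and> y [^] Suc n = fn n \<otimes> kn n"
    by metis
  have "\<not> inj fn"
    using F(1) fk by (metis finite_imageD finite_subset image_subsetI infinite_UNIV_nat)
  then obtain a b where ab: "a < b" "fn a = fn b"
    unfolding inj_def by (metis linorder_neqE_nat)
  have fc: "fn a \<in> carrier G" and kc: "kn a \<in> carrier G" "kn b \<in> carrier G"
    using fk F Qc by auto
  have "y [^] Suc b = y [^] Suc a \<otimes> y [^] (b - a)"
    using ab yc by (metis Suc_diff_le less_imp_le nat_pow_mult le_add_diff_inverse Suc_le_mono add_Suc)
  then have "fn a \<otimes> kn b = fn a \<otimes> kn a \<otimes> y [^] (b - a)"
    using fk ab by metis
  then have "kn b = kn a \<otimes> y [^] (b - a)"
    using fc kc yc by (metis m_assoc nat_pow_closed m_closed Units_l_cancel Units_eq)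
  then have "y [^] (b - a) = inv (kn a) \<otimes> kn b"
    using kc yc by (metis inv_solve_left nat_pow_closed)
  moreover have "inv (kn a) \<otimes> kn b \<in> Q" using fk Qm by blast
  ultimately show False using pow_notin[of "b - a"] ab by simp
qed

text \<open>For a subgroup, the cover exhibits every right coset as Q or Q f^-1, f \<in> F.\<close>

lemma (in group) cover_finite_rcosets:
  assumes sg: "subgroup Q G" and F: "finite F" "F \<subseteq> carrier G"
    and cov: "unit_translate_cover Q F"
  shows "finite (rcosets Q)"
proof -
  have "rcosets Q \<subseteq> insert Q ((\<lambda>f. Q #> inv f) ` F)"
  proof
    fix C assume "C \<in> rcosets Q"
    then obtain a where a: "a \<in> carrier G" and C: "C = Q #> a"
      unfolding RCOSETS_def by auto
    show "C \<in> insert Q ((\<lambda>f. Q #> inv f) ` F)"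
    proof (cases "a \<in> Q")
      case True
      then show ?thesis using coset_join2[OF a sg True] C by simp
    next
      case False
      then have "inv a \<in> carrier G - Q" using a sg by (metis DiffI inv_closed inv_inv subgroup.m_inv_closed)
      then obtain f k where f: "f \<in> F" and k: "k \<in> Q" and inva: "inv a = f \<otimes> k"
        using cov sg F unfolding unit_translate_cover_def
        by (metis subgroup.one_closed r_one subsetD)
      have fc: "f \<in> carrier G" and kc: "k \<in> carrier G" using f k F sg subgroup.mem_carrier by auto
      have "a = inv k \<otimes> inv f" using inva fc kc a by (metis inv_inv inv_mult_group)
      then have "a \<in> Q #> inv f"
        using k sg fc unfolding r_coset_def by (auto intro: subgroup.m_inv_closed)
      then have "C = Q #> inv f" using C sg fc by (metis repr_independence inv_closed)
      then show ?thesis using f by blast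
    qed
  qed
  then show ?thesis using F(1) by (meson finite.insertI finite_imageI finite_subset)
qed

lemma (in group) cover_subgroup_finite_index:
  assumes inf: "infinite (carrier G)" and Qc: "Q \<subseteq> carrier G"
    and Qm: "\<And>x y. x \<in> Q \<Longrightarrow> y \<in> Q \<Longrightarrow> x \<otimes> y \<in> Q"
    and F: "finite F" "F \<subseteq> carrier G" and cov: "unit_translate_cover Q F"
  shows "subgroup Q G \<and> finite (rcosets Q)"
proof -
  have one: "\<one> \<in> Q" using cover_one_mem[OF inf Qc Qm F(1) cov] .
  have sg: "subgroup Q G"
    using Qc Qm one cover_inv_mem[OF Qc Qm one F cov] by (intro subgroupI) auto
  then show ?thesis using cover_finite_rcosets[OF sg F cov] by simp
qed

section \<open>Relative Green's relations in an arbitrary semigroup\<close>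

text \<open>An element R^T-related to an element of T lies in T, since u \<in> v T^1 \<subseteq> T.
  Consequently the H^T-class of any element of S - T is an outer class.\<close>

lemma rel_R_mem:
  assumes "subsemigroup m S T" and "rel_R m T u v" and "v \<in> T"
  shows "u \<in> T"
proof -
  have "u \<in> right_ideal1 m T v"
    using assms(2) unfolding rel_R_def right_ideal1_def by auto
  then show ?thesis
    using assms(1,3) unfolding right_ideal1_def subsemigroup_def by auto
qed

lemma outer_class_representatives:
  assumes sub: "subsemigroup m S T" and fin: "finite_green_index m S T"
  obtains R where "finite R" "R \<subseteq> S" "\<And>u. u \<in> S - T \<Longrightarrow> \<exists>r\<in>R. rel_H m T r u"
proof -
  define OC where "OC = outer_H_classes m S T"
  define hclass where "hclass u = {v \<in> S. rel_H m T u v}" for u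
  have hclass_mem: "u \<in> hclass u" if "u \<in> S" for u
    using that unfolding hclass_def rel_H_def rel_R_def rel_L_def by simp
  have hclass_outer: "hclass u \<in> OC" if u: "u \<in> S - T" for u
  proof -
    have "hclass u \<subseteq> S - T"
      using u rel_R_mem[OF sub] unfolding hclass_def rel_H_def rel_R_def by auto
    then show ?thesis
      using u unfolding OC_def outer_H_classes_def H_classes_def hclass_def by blast
  qed
  have "\<forall>C\<in>OC. \<exists>r. r \<in> C"
    unfolding OC_def outer_H_classes_def H_classes_def
    using hclass_mem unfolding hclass_def by blast
  then obtain rep where rep: "\<And>C. C \<in> OC \<Longrightarrow> rep C \<in> C" by metis
  have OC_sub: "C \<subseteq> S" if "C \<in> OC" for C
    using that unfolding OC_def outer_H_classes_def by blast
  show ?thesis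
  proof
    show "finite (rep ` OC)" using fin unfolding finite_green_index_def OC_def by simp
    show "rep ` OC \<subseteq> S" using rep OC_sub by blast
    fix u assume u: "u \<in> S - T"
    have "rel_H m T u (rep (hclass u))"
      using rep[OF hclass_outer[OF u]] unfolding hclass_def by simp
    then show "\<exists>r\<in>rep ` OC. rel_H m T r u"
      using hclass_outer[OF u] unfolding rel_H_def rel_R_def rel_L_def by auto
  qed
qed

section \<open>Subsemigroups of a right group\<close>

definition fibre :: "('g \<times> 'e) set \<Rightarrow> 'e \<Rightarrow> 'g set" where
  "fibre T e = {g. (g, e) \<in> T}"

lemma rg_mult_simp [simp]: "rg_mult G (g, e) (h, f) = (g \<otimes>\<^bsub>G\<^esub> h, f)"
  by (simp add: rg_mult_def)

lemma fibre_mult_closed: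
  assumes "subsemigroup (rg_mult G) (carrier G \<times> E) T"
    and "x \<in> fibre T e" and "y \<in> fibre T e"
  shows "x \<otimes>\<^bsub>G\<^esub> y \<in> fibre T e"
  using assms unfolding subsemigroup_def fibre_def by (metis mem_Collect_eq rg_mult_simp)

text \<open>Distinct H^T-related elements of a right group: T^1 (g0,e0) = T^1 (x,e) forces
  e0 = e (left multiplication keeps the E-component), and the equality of right
  ideals gives x = g0 k and g0 = x k' with (k,e), (k',e) \<in> T, whence k' = k^-1.\<close>

lemma (in group) right_group_H_related:
  assumes TS: "T \<subseteq> carrier G \<times> E"
    and H: "rel_H (rg_mult G) T (g0, e0) (x, e)" and ne: "(x, e) \<noteq> (g0, e0)"
    and x: "x \<in> carrier G" and g0: "g0 \<in> carrier G"
  shows "\<exists>k\<in>fibre T e. inv k \<in> fibre T e \<and> x = g0 \<otimes> k"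
proof -
  have "(x, e) \<in> left_ideal1 (rg_mult G) T (g0, e0)"
    using H unfolding rel_H_def rel_L_def left_ideal1_def by auto
  then have e0: "e0 = e" using ne unfolding left_ideal1_def by auto
  have "(x, e) \<in> right_ideal1 (rg_mult G) T (g0, e0)"
    using H unfolding rel_H_def rel_R_def right_ideal1_def by auto
  then obtain k where k: "(k, e) \<in> T" "x = g0 \<otimes> k"
    using ne unfolding right_ideal1_def by auto
  have "(g0, e0) \<in> right_ideal1 (rg_mult G) T (x, e)"
    using H unfolding rel_H_def rel_R_def right_ideal1_def by auto
  then obtain k' where k': "(k', e) \<in> T" "g0 = x \<otimes> k'"
    using ne e0 unfolding right_ideal1_def by auto
  have kc: "k \<in> carrier G" "k' \<in> carrier G" using k k' TS by auto
  have "x = x \<otimes> (k' \<otimes> k)" using k k' kc x by (simp add: m_assoc)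
  then have "k' \<otimes> k = \<one>" using x kc by simp
  then have "inv k = k'" using kc by (metis inv_equality)
  then show ?thesis using k k' unfolding fibre_def by auto
qed

lemma (in group) fibre_cover:
  assumes sub: "subsemigroup (rg_mult G) (carrier G \<times> E) T"
    and R: "R \<subseteq> carrier G \<times> E"
    and rep: "\<And>u. u \<in> carrier G \<times> E - T \<Longrightarrow> \<exists>r\<in>R. rel_H (rg_mult G) T r u"
    and e: "e \<in> E"
  shows "unit_translate_cover (fibre T e) (fst ` R)"
  unfolding unit_translate_cover_def
proof
  fix x assume x: "x \<in> carrier G - fibre T e"
  then have "(x, e) \<in> carrier G \<times> E - T" using e unfolding fibre_def by auto
  then obtain g0 e0 where r: "(g0, e0) \<in> R" and H: "rel_H (rg_mult G) T (g0, e0) (x, e)"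
    using rep by fastforce
  have g0: "g0 \<in> carrier G" using r R by auto
  have "g0 \<in> fst ` R" using r by force
  moreover have "x = g0 \<or> (\<exists>k\<in>fibre T e. inv k \<in> fibre T e \<and> x = g0 \<otimes> k)"
    using sub right_group_H_related[OF _ H _ _ g0] x unfolding subsemigroup_def by auto
  ultimately show "\<exists>f\<in>fst ` R. x = f \<or> (\<exists>k\<in>fibre T e. inv k \<in> fibre T e \<and> x = f \<otimes> k)"
    by blast
qed

lemma (in group) fibre_subgroup_finite_index:
  assumes inf: "infinite (carrier G)"
    and sub: "subsemigroup (rg_mult G) (carrier G \<times> E) T"
    and fin: "finite_green_index (rg_mult G) (carrier G \<times> E) T"
    and e: "e \<in> E"
  shows "subgroup (fibre T e) G \<and> finite (rcosets (fibre T e))"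
proof -
  obtain R where R: "finite R" "R \<subseteq> carrier G \<times> E"
    and rep: "\<And>u. u \<in> carrier G \<times> E - T \<Longrightarrow> \<exists>r\<in>R. rel_H (rg_mult G) T r u"
    using outer_class_representatives[OF sub fin] by blast
  have "fibre T e \<subseteq> carrier G" using sub unfolding subsemigroup_def fibre_def by auto
  moreover have "fst ` R \<subseteq> carrier G" using R(2) by auto
  ultimately show ?thesis
    using cover_subgroup_finite_index[OF inf _ fibre_mult_closed[OF sub] _ _
        fibre_cover[OF sub R(2) rep e]] R(1) by blast
qed

text \<open>Once every fibre contains 1, all fibres coincide, because
  (g,e)(1,f) = (g,f); so T is the product of one fibre with E.\<close>

lemma (in group) subsemigroup_eq_fibre_times:
  assumes sub: "subsemigroup (rg_mult G) (carrier G \<times> E) T"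
    and one: "\<And>e. e \<in> E \<Longrightarrow> \<one> \<in> fibre T e" and e0: "e0 \<in> E"
  shows "T = fibre T e0 \<times> E"
proof -
  have TS: "T \<subseteq> carrier G \<times> E" using sub unfolding subsemigroup_def by blast
  have fibre_sub: "fibre T e \<subseteq> fibre T f" if "f \<in> E" for e f
  proof
    fix g assume g: "g \<in> fibre T e"
    then have "rg_mult G (g, e) (\<one>, f) \<in> T"
      using sub one[OF that] unfolding subsemigroup_def fibre_def by blast
    moreover have "g \<in> carrier G" using g TS unfolding fibre_def by auto
    ultimately show "g \<in> fibre T f" unfolding fibre_def by simp
  qed
  show ?thesis
  proof
    show "T \<subseteq> fibre T e0 \<times> E"
      using TS fibre_sub[OF e0] unfolding fibre_def by auto
    show "fibre T e0 \<times> E \<subseteq> T"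
      using fibre_sub unfolding fibre_def by auto
  qed
qed

theorem mainTheorem15:
  fixes G :: "('g, 'm) monoid_scheme" and E :: "'e set" and T :: "('g \<times> 'e) set"
  assumes "group G"
    and "infinite (carrier G)"
    and "subsemigroup (rg_mult G) (carrier G \<times> E) T"
    and "finite_green_index (rg_mult G) (carrier G \<times> E) T"
  shows "\<exists>H. subgroup H G \<and> finite (rcosets\<^bsub>G\<^esub> H) \<and> T = H \<times> E"
proof (cases "E = {}")
  case True
  text \<open>Then T is empty, and H = G works; G has a single coset (empty cover).\<close>
  have "T = carrier G \<times> E" using assms(3) True unfolding subsemigroup_def by auto
  moreover have "finite (rcosets\<^bsub>G\<^esub> carrier G)"
    using group.cover_finite_rcosets[OF assms(1) group.subgroup_self[OF assms(1)], of "{}"]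
    unfolding group.unit_translate_cover_def[OF assms(1)] by simp
  ultimately show ?thesis using group.subgroup_self[OF assms(1)] by blast
next
  case False
  then obtain e0 where e0: "e0 \<in> E" by blast
  have fibres: "subgroup (fibre T e) G \<and> finite (rcosets\<^bsub>G\<^esub> fibre T e)" if "e \<in> E" for e
    using group.fibre_subgroup_finite_index[OF assms that] .
  have "T = fibre T e0 \<times> E"
    using group.subsemigroup_eq_fibre_times[OF assms(1,3) _ e0] fibres subgroup.one_closed
    by blast
  then show ?thesis using fibres[OF e0] by blast
qed

end
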